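(* Let $F(z)=\sum_{k=0}^\infty b_k z^k\in\mathcal{B}$ with $b_1=a\in(0,1)$, and let $0<r\le 1/\sqrt3$. Then for every integer $n\ge 2$, \[ \sum_{k=2}^n k|b_k|^2r^{2k}\le \frac{3(9-4a^2)^2}{64a^4}\sum_{k=2}^n\frac1k\left(\frac43a^2r^2\right)^k. \]
   Context: $\mathbb{D}$ denotes the open unit disc. $\mathcal{B}$ is the class of functions $F$ analytic in $\mathbb{D}$ satisfying $|F'(z)|\le \frac{1}{1-|z|^2}$ for all $z\in\mathbb{D}$. For $F\in\mathcal{B}$ we write its Taylor expansion as $F(z)=\sum_{k=0}^\infty b_k z^k$. *)

theory Defs
  imports "HOL-Complex_Analysis.Complex_Analysis"
begin

definition bloch_class :: "(complex \<Rightarrow> complex) set" where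
  "bloch_class = {F. F holomorphic_on ball 0 1 \<and>
     (\<forall>z\<in>ball 0 1. norm (deriv F z) \<le> 1 / (1 - (norm z)\<^sup>2))}"

definition taylor_coeff :: "(complex \<Rightarrow> complex) \<Rightarrow> nat \<Rightarrow> complex" where
  "taylor_coeff F k = (deriv ^^ k) F 0 / of_nat (fact k)"

end

theory Submission
  imports Defs
begin

(* For F in B the Bloch bound at radius 1/sqrt 3 gives |F'| <= 3/2 there, so
   G(z) = (2/3) F'(z / sqrt 3) maps the closed disc into itself, with G(0) = c = 2a/3 and
   Taylor coefficients g_j = (2/3) 3^(-j/2) (j+1) b_(j+1).  One step of Schur's algorithm
   controls them: the quotient w = (G - c) / (1 - c G) is again bounded by 1 and vanishes
   at 0, so Bessel's inequality on the unit circle, applied to w times the truncation below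
   degree N of 1 - c G, compares the coefficients of the two sides of w (1 - c G) = G - c:
     sum_{j=1..N} |g_j|^2 <= (1 - c^2)^2 + c^2 sum_{j=1..N-1} |g_j|^2.
   Iterating, the partial sums of |g_j|^2 are dominated by those of (1 - c^2)^2 c^(2(j-1)),
   and Abel summation against the weights (3r^2)^(j+1) / (j+1), which decrease because
   3r^2 <= 1, gives the inequality. *)

section \<open>Mean square on the unit circle\<close>

abbreviation unit_circle :: "real \<Rightarrow> complex" where
  "unit_circle \<equiv> circlepath 0 1"

lemma norm_unit_circle [simp]: "norm (unit_circle t) = 1"
  by (simp add: circlepath norm_exp_eq_Re)

lemma cnj_unit_circle: "cnj (unit_circle t) = inverse (unit_circle t)"
  by (simp add: circlepath exp_cnj exp_minus)

lemma unit_circle_nonzero [simp]: "unit_circle t \<noteq> 0"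
  using norm_unit_circle[of t] by (metis norm_zero zero_neq_one)

lemma continuous_on_unit_circle_compose:
  assumes "continuous_on (sphere 0 1) h"
  shows "continuous_on {0..1} (\<lambda>t. h (unit_circle t))"
proof -
  have "continuous_on {0..1} unit_circle"
    using path_circlepath unfolding path_def by blast
  moreover have "unit_circle ` {0..1} \<subseteq> sphere 0 1"
    using path_image_circlepath[of 0 1] unfolding path_image_def by simp
  ultimately show ?thesis
    using continuous_on_compose2[OF assms] by blast
qed

lemma taylor_coeff_has_integral_unit_circle:
  assumes "continuous_on (cball 0 1) F" "F holomorphic_on ball 0 1"
  shows "((\<lambda>t. F (unit_circle t) * cnj (unit_circle t) ^ k) has_integral taylor_coeff F k) {0..1}"
proof -
  have "((\<lambda>u. F u / (u - 0) ^ Suc k) has_contour_integral (2 * pi * \<i> / fact k * (deriv ^^ k) F 0))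
          unit_circle"
    by (rule Cauchy_has_contour_integral_higher_derivative_circlepath[OF assms]) simp
  then have "((\<lambda>t. F (unit_circle t) / unit_circle t ^ Suc k
                    * vector_derivative unit_circle (at t within {0..1}))
               has_integral (2 * pi * \<i> / fact k * (deriv ^^ k) F 0)) {0..1}"
    unfolding has_contour_integral_def by simp
  then have "((\<lambda>t. (2 * pi * \<i>) * (F (unit_circle t) * cnj (unit_circle t) ^ k))
               has_integral (2 * pi * \<i> / fact k * (deriv ^^ k) F 0)) {0..1}"
  proof (rule has_integral_eq[rotated])
    fix t :: real assume "t \<in> {0..1}"
    then have "vector_derivative unit_circle (at t within {0..1}) = 2 * pi * \<i> * unit_circle t"
      using vector_derivative_circlepath01[of t 0 1] by (simp add: circlepath)
    then show "F (unit_circle t) / unit_circle t ^ Suc k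
                 * vector_derivative unit_circle (at t within {0..1})
               = (2 * pi * \<i>) * (F (unit_circle t) * cnj (unit_circle t) ^ k)"
      by (simp add: cnj_unit_circle field_simps power_inverse)
  qed
  then show ?thesis
    by (subst (asm) has_integral_mult_right_iff) (auto simp: taylor_coeff_def)
qed

lemma taylor_coeff_eq_fps_nth:
  assumes "F has_fps_expansion Ff"
  shows "taylor_coeff F k = fps_nth Ff k"
  using fps_nth_fps_expansion[OF assms] by (simp add: taylor_coeff_def)

lemma unit_circle_powers_orthonormal:
  "((\<lambda>t. unit_circle t ^ j * cnj (unit_circle t) ^ k) has_integral (if j = k then 1 else 0)) {0..1}"
proof -
  have "taylor_coeff (\<lambda>z. z ^ j) k = (if j = k then 1 else 0)"
    by (subst taylor_coeff_eq_fps_nth[OF has_fps_expansion_fps_X_power]) auto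
  moreover have "((\<lambda>t. unit_circle t ^ j * cnj (unit_circle t) ^ k) has_integral
                   taylor_coeff (\<lambda>z. z ^ j) k) {0..1}"
    by (rule taylor_coeff_has_integral_unit_circle) (auto intro: holomorphic_intros continuous_intros)
  ultimately show ?thesis by simp
qed

lemma parseval_poly_unit_circle:
  assumes "finite K"
  shows "((\<lambda>t. (\<Sum>k\<in>K. q k * unit_circle t ^ k) * cnj (\<Sum>k\<in>K. q k * unit_circle t ^ k))
           has_integral (\<Sum>k\<in>K. q k * cnj (q k))) {0..1}"
proof -
  have expand: "(\<Sum>k\<in>K. q k * z ^ k) * cnj (\<Sum>k\<in>K. q k * z ^ k) =
      (\<Sum>j\<in>K. \<Sum>k\<in>K. (q j * cnj (q k)) * (z ^ j * cnj z ^ k))" for z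
    by (simp add: sum_distrib_left sum_distrib_right cnj_sum algebra_simps) (rule sum.swap)
  have "((\<lambda>t. \<Sum>j\<in>K. \<Sum>k\<in>K. (q j * cnj (q k)) * (unit_circle t ^ j * cnj (unit_circle t) ^ k))
          has_integral (\<Sum>j\<in>K. \<Sum>k\<in>K. (q j * cnj (q k)) * (if j = k then 1 else 0))) {0..1}"
    by (intro has_integral_sum assms has_integral_mult_right unit_circle_powers_orthonormal)
  then show ?thesis
    unfolding expand using assms by (simp add: if_distrib cong: if_cong)
qed

definition circle_mean_sq :: "(complex \<Rightarrow> complex) \<Rightarrow> real" where
  "circle_mean_sq h = integral {0..1} (\<lambda>t. (norm (h (unit_circle t)))\<^sup>2)"

lemma circle_mean_sq_has_integral:
  assumes "continuous_on (sphere 0 1) h"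
  shows "((\<lambda>t. (norm (h (unit_circle t)))\<^sup>2) has_integral circle_mean_sq h) {0..1}"
proof -
  have "continuous_on (sphere 0 1) (\<lambda>z. (norm (h z))\<^sup>2)"
    by (intro continuous_intros assms)
  then show ?thesis
    unfolding circle_mean_sq_def
    by (intro integrable_integral integrable_continuous_interval continuous_on_unit_circle_compose)
qed

lemma circle_mean_sq_nonneg: "circle_mean_sq h \<ge> 0"
  unfolding circle_mean_sq_def
  by (cases "(\<lambda>t. (norm (h (unit_circle t)))\<^sup>2) integrable_on {0..1}")
     (auto intro!: integral_nonneg simp: not_integrable_integral)

lemma circle_mean_sq_has_integral_complex:
  assumes "continuous_on (sphere 0 1) h"
  shows "((\<lambda>t. h (unit_circle t) * cnj (h (unit_circle t))) has_integral of_real (circle_mean_sq h)) {0..1}"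
proof -
  have "((\<lambda>t. of_real ((norm (h (unit_circle t)))\<^sup>2) :: complex) has_integral
          of_real (circle_mean_sq h)) {0..1}"
    using has_integral_of_real[OF circle_mean_sq_has_integral[OF assms]] by (simp add: o_def)
  then show ?thesis by (simp only: complex_norm_square)
qed

lemma circle_mean_sq_poly:
  assumes "finite K"
  shows "circle_mean_sq (\<lambda>z. \<Sum>k\<in>K. q k * z ^ k) = (\<Sum>k\<in>K. (norm (q k))\<^sup>2)"
proof -
  have "((\<lambda>t. (\<Sum>k\<in>K. q k * unit_circle t ^ k) * cnj (\<Sum>k\<in>K. q k * unit_circle t ^ k))
          has_integral of_real (circle_mean_sq (\<lambda>z. \<Sum>k\<in>K. q k * z ^ k))) {0..1}"
    using circle_mean_sq_has_integral_complex[of "\<lambda>z. \<Sum>k\<in>K. q k * z ^ k"]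
    by (simp add: continuous_intros)
  from has_integral_unique[OF this parseval_poly_unit_circle[OF assms]]
  have "complex_of_real (circle_mean_sq (\<lambda>z. \<Sum>k\<in>K. q k * z ^ k))
          = complex_of_real (\<Sum>k\<in>K. (norm (q k))\<^sup>2)"
    by (simp only: of_real_sum complex_norm_square)
  then show ?thesis by (simp only: of_real_eq_iff)
qed

lemma circle_mean_sq_mono:
  assumes "continuous_on (sphere 0 1) f" "continuous_on (sphere 0 1) g"
    and "\<And>z. z \<in> sphere 0 1 \<Longrightarrow> norm (f z) \<le> norm (g z)"
  shows "circle_mean_sq f \<le> circle_mean_sq g"
  using assms(3)
  by (intro has_integral_le[OF circle_mean_sq_has_integral[OF assms(1)]
        circle_mean_sq_has_integral[OF assms(2)]]) (simp add: power_mono)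

lemma bessel_inequality_unit_circle:
  assumes cont: "continuous_on (cball 0 1) F" and holo: "F holomorphic_on ball 0 1"
  shows "(\<Sum>k\<le>N. (norm (taylor_coeff F k))\<^sup>2) \<le> circle_mean_sq F"
proof -
  define t where "t = taylor_coeff F"
  define P where "P = (\<lambda>z. \<Sum>k\<le>N. t k * z ^ k)"
  define S where "S = (\<Sum>k\<le>N. t k * cnj (t k))"
  have S: "S = of_real (\<Sum>k\<le>N. (norm (t k))\<^sup>2)"
    by (simp only: S_def of_real_sum complex_norm_square)
  have cF: "continuous_on (sphere 0 1) F"
    using cont by (rule continuous_on_subset) auto
  have cP: "continuous_on (sphere 0 1) P"
    unfolding P_def by (intro continuous_intros)
  have FF: "((\<lambda>x. F (unit_circle x) * cnj (F (unit_circle x))) has_integral of_real (circle_mean_sq F)) {0..1}"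
    by (rule circle_mean_sq_has_integral_complex[OF cF])
  have FP: "((\<lambda>x. F (unit_circle x) * cnj (P (unit_circle x))) has_integral S) {0..1}"
  proof -
    have "((\<lambda>x. \<Sum>k\<le>N. cnj (t k) * (F (unit_circle x) * cnj (unit_circle x) ^ k)) has_integral
            (\<Sum>k\<le>N. cnj (t k) * t k)) {0..1}"
      unfolding t_def
      by (intro has_integral_sum has_integral_mult_right taylor_coeff_has_integral_unit_circle cont holo)
         auto
    moreover have "(\<Sum>k\<le>N. cnj (t k) * (F z * cnj z ^ k)) = F z * cnj (P z)" for z
      by (simp add: P_def cnj_sum sum_distrib_left algebra_simps)
    ultimately show ?thesis by (simp add: S_def mult.commute)
  qed
  have PF: "((\<lambda>x. P (unit_circle x) * cnj (F (unit_circle x))) has_integral cnj S) {0..1}"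
    using has_integral_cnj[of "\<lambda>x. F (unit_circle x) * cnj (P (unit_circle x))" S "{0..1}"] FP
    by (simp add: o_def mult.commute)
  have PP: "((\<lambda>x. P (unit_circle x) * cnj (P (unit_circle x))) has_integral S) {0..1}"
    unfolding P_def S_def by (rule parseval_poly_unit_circle) simp
  have expand: "((\<lambda>x. (F (unit_circle x) - P (unit_circle x)) * cnj (F (unit_circle x) - P (unit_circle x)))
          has_integral (of_real (circle_mean_sq F) - S - cnj S + S)) {0..1}"
    using has_integral_add[OF has_integral_diff[OF has_integral_diff[OF FF FP] PF] PP]
    by (simp add: algebra_simps)
  have "((\<lambda>x. (F (unit_circle x) - P (unit_circle x)) * cnj (F (unit_circle x) - P (unit_circle x)))
          has_integral of_real (circle_mean_sq (\<lambda>z. F z - P z))) {0..1}"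
    using circle_mean_sq_has_integral_complex[of "\<lambda>z. F z - P z"] cF cP
    by (simp add: continuous_on_diff)
  from has_integral_unique[OF this expand]
  have "complex_of_real (circle_mean_sq (\<lambda>z. F z - P z))
          = complex_of_real (circle_mean_sq F - (\<Sum>k\<le>N. (norm (t k))\<^sup>2))"
    unfolding S by simp
  then have "circle_mean_sq (\<lambda>z. F z - P z) = circle_mean_sq F - (\<Sum>k\<le>N. (norm (t k))\<^sup>2)"
    by (simp only: of_real_eq_iff)
  with circle_mean_sq_nonneg[of "\<lambda>z. F z - P z"] show ?thesis by (simp add: t_def)
qed

lemma sum_sq_taylor_coeff_mult_poly_le:
  assumes "continuous_on (cball 0 1) w" "w holomorphic_on ball 0 1"
    and "\<And>z. z \<in> sphere 0 1 \<Longrightarrow> norm (w z) \<le> 1" and "finite K"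
  shows "(\<Sum>k\<le>N. (norm (taylor_coeff (\<lambda>z. w z * (\<Sum>i\<in>K. q i * z ^ i)) k))\<^sup>2)
           \<le> (\<Sum>i\<in>K. (norm (q i))\<^sup>2)"
proof -
  define P where "P = (\<lambda>z. \<Sum>i\<in>K. q i * z ^ i)"
  have cw: "continuous_on (sphere 0 1) w"
    using assms(1) by (rule continuous_on_subset) auto
  have "(\<Sum>k\<le>N. (norm (taylor_coeff (\<lambda>z. w z * P z) k))\<^sup>2) \<le> circle_mean_sq (\<lambda>z. w z * P z)"
    unfolding P_def using assms(1,2)
    by (intro bessel_inequality_unit_circle holomorphic_intros continuous_intros)
  also have "\<dots> \<le> circle_mean_sq P"
    using cw assms(3) unfolding P_def
    by (intro circle_mean_sq_mono continuous_intros)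
       (auto simp: norm_mult intro: mult_left_le_one_le)
  also have "\<dots> = (\<Sum>i\<in>K. (norm (q i))\<^sup>2)"
    unfolding P_def by (rule circle_mean_sq_poly[OF assms(4)])
  finally show ?thesis unfolding P_def .
qed

section \<open>One step of Schur's algorithm\<close>

lemma fps_nth_mult_cutoff:
  fixes W B :: "'a :: comm_semiring_0 fps"
  assumes "fps_nth W 0 = 0" "j \<le> N"
  shows "fps_nth (W * fps_cutoff N B) j = fps_nth (W * B) j"
  unfolding fps_mult_nth
proof (intro sum.cong refl)
  fix i assume "i \<in> {0..j}"
  then show "fps_nth W i * fps_nth (fps_cutoff N B) (j - i) = fps_nth W i * fps_nth B (j - i)"
    using assms by (cases "i = 0") auto
qed

lemma has_fps_expansion_poly_cutoff:
  fixes f :: "'a :: {banach, real_normed_field} fps"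
  shows "(\<lambda>z. \<Sum>k<N. fps_nth f k * z ^ k) has_fps_expansion fps_cutoff N f"
proof -
  have "fps_cutoff N f = (\<Sum>k<N. fps_const (fps_nth f k) * fps_X ^ k)"
    by (rule fps_ext) (simp add: fps_sum_nth if_distrib cong: if_cong)
  then show ?thesis by (simp only:) (intro fps_expansion_intros)
qed

lemma norm_diff_le_norm_one_minus_mult:
  fixes g :: complex and c :: real
  assumes "\<bar>c\<bar> \<le> 1" "norm g \<le> 1"
  shows "norm (g - of_real c) \<le> norm (1 - of_real c * g)"
proof -
  have "(norm (1 - of_real c * g))\<^sup>2 - (norm (g - of_real c))\<^sup>2 = (1 - c\<^sup>2) * (1 - (norm g)\<^sup>2)"
    unfolding cmod_power2 by (simp add: power2_eq_square algebra_simps)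
  also have "\<dots> \<ge> 0"
    using assms abs_square_le_1[of c] power_le_one[of "norm g" 2]
    by (intro mult_nonneg_nonneg) auto
  finally show ?thesis
    by (simp add: power2_le_iff_abs_le)
qed

lemma sum_sq_fps_nth_le_of_schur_quotient:
  fixes w A B :: "complex \<Rightarrow> complex"
  assumes "continuous_on (cball 0 1) w" "w holomorphic_on ball 0 1"
    and "\<And>z. z \<in> sphere 0 1 \<Longrightarrow> norm (w z) \<le> 1" and "w 0 = 0"
    and "A has_fps_expansion Af" "B has_fps_expansion Bf"
    and "eventually (\<lambda>z. w z * B z = A z) (nhds 0)"
  shows "(\<Sum>k\<le>N. (norm (fps_nth Af k))\<^sup>2) \<le> (\<Sum>k<N. (norm (fps_nth Bf k))\<^sup>2)"
proof -
  define Wf where "Wf = fps_expansion w 0"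
  have WE: "w has_fps_expansion Wf"
    unfolding Wf_def using assms(2) by (intro has_fps_expansion_fps_expansion) auto
  have Wf0: "fps_nth Wf 0 = 0"
    using taylor_coeff_eq_fps_nth[OF WE, of 0] assms(4) by (simp add: taylor_coeff_def)
  have "A has_fps_expansion Wf * Bf"
    using has_fps_expansion_cong[of "\<lambda>z. w z * B z" A "Wf * Bf" "Wf * Bf"] assms(7)
      has_fps_expansion_mult[OF WE assms(6)] by blast
  then have WBA: "Wf * Bf = Af"
    by (rule fps_expansion_unique_complex[OF _ assms(5)])
  define Q where "Q = (\<lambda>z. \<Sum>k<N. fps_nth Bf k * z ^ k)"
  have "(\<lambda>z. w z * Q z) has_fps_expansion Wf * fps_cutoff N Bf"
    unfolding Q_def by (intro has_fps_expansion_mult WE has_fps_expansion_poly_cutoff)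
  then have "taylor_coeff (\<lambda>z. w z * Q z) k = fps_nth Af k" if "k \<le> N" for k
    using that by (simp add: taylor_coeff_eq_fps_nth fps_nth_mult_cutoff Wf0 WBA)
  then have "(\<Sum>k\<le>N. (norm (fps_nth Af k))\<^sup>2) = (\<Sum>k\<le>N. (norm (taylor_coeff (\<lambda>z. w z * Q z) k))\<^sup>2)"
    by (intro sum.cong) simp_all
  also have "\<dots> \<le> (\<Sum>k<N. (norm (fps_nth Bf k))\<^sup>2)"
    unfolding Q_def using assms(1-3) by (rule sum_sq_taylor_coeff_mult_poly_le[OF _ _ _ finite_lessThan])
  finally show ?thesis .
qed

lemma schur_moebius_quotient:
  fixes G :: "complex \<Rightarrow> complex" and c :: real
  assumes cont: "continuous_on (cball 0 1) G" and holo: "G holomorphic_on ball 0 1"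
    and bound: "\<And>z. z \<in> cball 0 1 \<Longrightarrow> norm (G z) \<le> 1" and c: "\<bar>c\<bar> < 1"
  defines "w \<equiv> \<lambda>z. (G z - of_real c) / (1 - of_real c * G z)"
  shows "\<And>z. z \<in> cball 0 1 \<Longrightarrow> 1 - of_real c * G z \<noteq> 0"
    and "continuous_on (cball 0 1) w" "w holomorphic_on ball 0 1"
    and "\<And>z. z \<in> sphere 0 1 \<Longrightarrow> norm (w z) \<le> 1"
proof -
  show nonzero: "1 - of_real c * G z \<noteq> 0" if "z \<in> cball 0 1" for z
  proof -
    have "norm (of_real c * G z) \<le> \<bar>c\<bar>"
      using bound[OF that] by (simp add: norm_mult mult_left_le)
    then show ?thesis using c by auto
  qed
  show "continuous_on (cball 0 1) w"
    unfolding w_def using nonzero by (intro continuous_intros cont) auto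
  show "w holomorphic_on ball 0 1"
    unfolding w_def using nonzero by (intro holomorphic_intros holo) auto
  show "norm (w z) \<le> 1" if "z \<in> sphere 0 1" for z
    using norm_diff_le_norm_one_minus_mult[of c "G z"] that bound[of z] c nonzero[of z]
    by (simp add: w_def norm_divide divide_le_eq_1)
qed

lemma schur_coeff_recursion:
  fixes G :: "complex \<Rightarrow> complex" and c :: real
  assumes cont: "continuous_on (cball 0 1) G" and holo: "G holomorphic_on ball 0 1"
    and bound: "\<And>z. z \<in> cball 0 1 \<Longrightarrow> norm (G z) \<le> 1"
    and G0: "G 0 = of_real c" and c: "\<bar>c\<bar> < 1"
  shows "(\<Sum>j<Suc N. (norm (taylor_coeff G (Suc j)))\<^sup>2)
           \<le> (1 - c\<^sup>2)\<^sup>2 + c\<^sup>2 * (\<Sum>j<N. (norm (taylor_coeff G (Suc j)))\<^sup>2)"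
proof -
  define Gf where "Gf = fps_expansion G 0"
  have GE: "G has_fps_expansion Gf"
    unfolding Gf_def using holo by (intro has_fps_expansion_fps_expansion) auto
  have Gf: "fps_nth Gf j = taylor_coeff G j" for j
    by (rule taylor_coeff_eq_fps_nth[OF GE, symmetric])
  define Af where "Af = Gf - fps_const (of_real c)"
  define Bf where "Bf = 1 - fps_const (of_real c) * Gf"
  have AE: "(\<lambda>z. G z - of_real c) has_fps_expansion Af"
    and BE: "(\<lambda>z. 1 - of_real c * G z) has_fps_expansion Bf"
    unfolding Af_def Bf_def by (intro fps_expansion_intros GE)+
  note w = schur_moebius_quotient[OF cont holo bound c]
  have "1 - of_real c * G z \<noteq> 0" if "z \<in> ball 0 1" for z
    using w(1) that by auto
  moreover have "eventually (\<lambda>z. z \<in> ball 0 1) (nhds (0::complex))"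
    by (intro eventually_nhds_in_open) auto
  ultimately have w_B: "eventually (\<lambda>z. (G z - of_real c) / (1 - of_real c * G z) * (1 - of_real c * G z)
                                = G z - of_real c) (nhds 0)"
    by (auto elim!: eventually_mono)
  have Af_Bf: "(\<Sum>k\<le>Suc N. (norm (fps_nth Af k))\<^sup>2) \<le> (\<Sum>k<Suc N. (norm (fps_nth Bf k))\<^sup>2)"
    by (rule sum_sq_fps_nth_le_of_schur_quotient[OF w(2-4) _ AE BE w_B]) (use G0 in auto)
  have "taylor_coeff G 0 = of_real c"
    by (simp add: taylor_coeff_def G0)
  then have Af0: "fps_nth Af 0 = 0" and Bf0: "fps_nth Bf 0 = of_real (1 - c\<^sup>2)"
    by (simp_all add: Af_def Bf_def Gf power2_eq_square)
  have AfSuc: "fps_nth Af (Suc j) = taylor_coeff G (Suc j)"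
    and BfSuc: "norm (fps_nth Bf (Suc j)) = \<bar>c\<bar> * norm (taylor_coeff G (Suc j))" for j
    by (simp_all add: Af_def Bf_def Gf norm_mult)
  have "(\<Sum>k\<le>Suc N. (norm (fps_nth Af k))\<^sup>2) = (\<Sum>j<Suc N. (norm (taylor_coeff G (Suc j)))\<^sup>2)"
    by (simp only: sum.atMost_Suc_shift Af0 AfSuc lessThan_Suc_atMost) simp
  moreover have "(\<Sum>k<Suc N. (norm (fps_nth Bf k))\<^sup>2)
                   = (1 - c\<^sup>2)\<^sup>2 + c\<^sup>2 * (\<Sum>j<N. (norm (taylor_coeff G (Suc j)))\<^sup>2)"
    by (simp only: sum.lessThan_Suc_shift Bf0 BfSuc norm_of_real power2_abs power_mult_distrib
        sum_distrib_left)
  ultimately show ?thesis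
    using Af_Bf by simp
qed

lemma schur_coeff_partial_sums_le:
  fixes G :: "complex \<Rightarrow> complex" and c :: real
  assumes "continuous_on (cball 0 1) G" "G holomorphic_on ball 0 1"
    and "\<And>z. z \<in> cball 0 1 \<Longrightarrow> norm (G z) \<le> 1"
    and "G 0 = of_real c" "\<bar>c\<bar> < 1"
  shows "(\<Sum>j<m. (norm (taylor_coeff G (Suc j)))\<^sup>2) \<le> (1 - c\<^sup>2)\<^sup>2 * (\<Sum>j<m. (c\<^sup>2) ^ j)"
proof (induction m)
  case (Suc m)
  have "(\<Sum>j<Suc m. (norm (taylor_coeff G (Suc j)))\<^sup>2)
          \<le> (1 - c\<^sup>2)\<^sup>2 + c\<^sup>2 * (\<Sum>j<m. (norm (taylor_coeff G (Suc j)))\<^sup>2)"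
    by (rule schur_coeff_recursion[OF assms])
  also have "\<dots> \<le> (1 - c\<^sup>2)\<^sup>2 + c\<^sup>2 * ((1 - c\<^sup>2)\<^sup>2 * (\<Sum>j<m. (c\<^sup>2) ^ j))"
    using Suc.IH by (intro add_left_mono mult_left_mono) auto
  also have "\<dots> = (1 - c\<^sup>2)\<^sup>2 * (1 + c\<^sup>2 * (\<Sum>j<m. (c\<^sup>2) ^ j))"
    by (simp add: algebra_simps)
  also have "1 + c\<^sup>2 * (\<Sum>j<m. (c\<^sup>2) ^ j) = (\<Sum>j<Suc m. (c\<^sup>2) ^ j)"
    by (simp only: sum.lessThan_Suc_shift power_0 power_Suc sum_distrib_left)
  finally show ?case .
qed simp

lemma weighted_sum_le_of_partial_sums_le:
  fixes w x y :: "nat \<Rightarrow> real"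
  assumes partial: "\<And>k. (\<Sum>j<k. x j) \<le> (\<Sum>j<k. y j)"
    and dec: "decseq w" and nonneg: "\<And>j. 0 \<le> w j"
  shows "(\<Sum>j<n. w j * x j) \<le> (\<Sum>j<n. w j * y j)"
proof -
  define d where "d j = x j - y j" for j
  have D: "(\<Sum>j<k. d j) \<le> 0" for k
    using partial[of k] by (simp add: d_def sum_subtractf)
  have abel: "(\<Sum>j<k. w j * d j) \<le> w k * (\<Sum>j<k. d j)" for k
  proof (induction k)
    case (Suc k)
    have "(\<Sum>j<Suc k. w j * d j) \<le> w k * (\<Sum>j<k. d j) + w k * d k"
      using Suc.IH by simp
    also have "\<dots> = w k * (\<Sum>j<Suc k. d j)"
      by (simp add: algebra_simps)
    also have "\<dots> \<le> w (Suc k) * (\<Sum>j<Suc k. d j)"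
      using D[of "Suc k"] dec by (intro mult_right_mono_neg) (simp_all add: decseq_Suc_iff)
    finally show ?case .
  qed simp
  have "(\<Sum>j<n. w j * d j) \<le> 0"
    using abel[of n] D[of n] nonneg[of n] by (meson mult_nonneg_nonpos order_trans)
  then show ?thesis
    by (simp add: d_def algebra_simps sum_subtractf)
qed

section \<open>The Bloch class\<close>

lemma taylor_coeff_scaled_deriv:
  assumes "F analytic_on {0}"
  shows "taylor_coeff (\<lambda>z. c * deriv F (u * z)) j = c * u ^ j * of_nat (Suc j) * taylor_coeff F (Suc j)"
proof -
  have FE: "F has_fps_expansion fps_expansion F 0"
    using assms by (rule analytic_at_imp_has_fps_expansion_0)
  have "(\<lambda>z. u * z) has_fps_expansion fps_const u * fps_X"
    by (intro fps_expansion_intros)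
  then have "(deriv F \<circ> (\<lambda>z. u * z)) has_fps_expansion (fps_deriv (fps_expansion F 0) oo (fps_const u * fps_X))"
    by (intro has_fps_expansion_compose has_fps_expansion_deriv FE) simp_all
  then have "(\<lambda>z. c * deriv F (u * z)) has_fps_expansion
               fps_const c * (fps_deriv (fps_expansion F 0) oo (fps_const u * fps_X))"
    by (intro has_fps_expansion_cmult_left) (simp add: o_def)
  then have "taylor_coeff (\<lambda>z. c * deriv F (u * z)) j
               = c * (u ^ j * (of_nat (Suc j) * fps_nth (fps_expansion F 0) (Suc j)))"
    by (simp only: taylor_coeff_eq_fps_nth fps_mult_left_const_nth fps_nth_compose_linear
        fps_deriv_nth Suc_eq_plus1)
  then show ?thesis
    by (simp add: taylor_coeff_eq_fps_nth[OF FE] mult_ac)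
qed

definition bloch_schur :: "(complex \<Rightarrow> complex) \<Rightarrow> complex \<Rightarrow> complex" where
  "bloch_schur F z = 2/3 * deriv F (of_real (1 / sqrt 3) * z)"

lemma bloch_schur_holomorphic:
  assumes "F \<in> bloch_class"
  shows "bloch_schur F holomorphic_on ball 0 (sqrt 3)"
proof -
  have "deriv F holomorphic_on ball 0 1"
    using assms by (intro holomorphic_deriv) (auto simp: bloch_class_def)
  moreover have "(\<lambda>z. of_real (1 / sqrt 3) * z) holomorphic_on ball 0 (sqrt 3)"
    by (intro holomorphic_intros)
  moreover have "of_real (1 / sqrt 3) * z \<in> ball 0 1" if "z \<in> ball 0 (sqrt 3)" for z :: complex
    using that by (simp add: norm_divide divide_less_eq)
  ultimately have "(deriv F \<circ> (\<lambda>z. of_real (1 / sqrt 3) * z)) holomorphic_on ball 0 (sqrt 3)"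
    by (intro holomorphic_on_compose_gen) auto
  then show ?thesis
    unfolding bloch_schur_def[abs_def] o_def by (intro holomorphic_intros)
qed

lemma norm_bloch_schur_le_1:
  assumes "F \<in> bloch_class" and z: "z \<in> cball 0 1"
  shows "norm (bloch_schur F z) \<le> 1"
proof -
  have "norm z < sqrt 3"
    using z by (simp add: real_less_rsqrt order.strict_trans1)
  then have "of_real (1 / sqrt 3) * z \<in> ball 0 1"
    by (simp add: norm_divide divide_less_eq)
  with assms(1) have "norm (deriv F (of_real (1 / sqrt 3) * z))
                       \<le> 1 / (1 - (norm (of_real (1 / sqrt 3) * z))\<^sup>2)"
    unfolding bloch_class_def by blast
  moreover have "(norm (of_real (1 / sqrt 3) * z))\<^sup>2 = (norm z)\<^sup>2 / 3"
    by (simp add: norm_divide power_divide)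
  ultimately have "norm (deriv F (of_real (1 / sqrt 3) * z)) \<le> 1 / (1 - (norm z)\<^sup>2 / 3)"
    by (simp only:)
  also have "\<dots> \<le> 3 / 2"
  proof -
    have "(norm z)\<^sup>2 \<le> 1"
      using z by (simp add: power_le_one)
    then show ?thesis
      by (simp add: divide_le_eq)
  qed
  finally show ?thesis
    by (simp add: bloch_schur_def norm_mult)
qed

lemma norm_taylor_coeff_bloch_schur:
  assumes "F \<in> bloch_class"
  shows "(norm (taylor_coeff (bloch_schur F) (Suc j)))\<^sup>2
           = 4/27 * (1/3) ^ j * (real (j + 2))\<^sup>2 * (norm (taylor_coeff F (j + 2)))\<^sup>2"
proof -
  have "F analytic_on {0}"
    using assms by (intro holomorphic_on_imp_analytic_at[of _ "ball 0 1"]) (auto simp: bloch_class_def)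
  have norm_eq: "norm (taylor_coeff (bloch_schur F) (Suc j))
                   = 2/3 * (1 / sqrt 3) ^ Suc j * real (j + 2) * norm (taylor_coeff F (j + 2))"
    unfolding bloch_schur_def[abs_def] taylor_coeff_scaled_deriv[OF \<open>F analytic_on {0}\<close>]
    by (simp add: norm_mult norm_divide norm_power del: of_nat_Suc)
  have "(1 / sqrt 3)\<^sup>2 = 1/3"
    by (simp add: power_divide)
  then have sq: "((1 / sqrt 3) ^ Suc j)\<^sup>2 = (1/3) ^ Suc j"
    by (metis power_mult mult.commute)
  show ?thesis
    unfolding norm_eq power_mult_distrib sq by (simp add: power2_eq_square)
qed

lemma bloch_coeff_partial_sums_le:
  assumes "F \<in> bloch_class" and "taylor_coeff F 1 = of_real a"
  shows "(\<Sum>j<m. 4/27 * (1/3) ^ j * (real (j + 2))\<^sup>2 * (norm (taylor_coeff F (j + 2)))\<^sup>2)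
           \<le> (\<Sum>j<m. (1 - (2*a/3)\<^sup>2)\<^sup>2 * ((2*a/3)\<^sup>2) ^ j)"
proof -
  have disc: "cball 0 1 \<subseteq> ball (0::complex) (sqrt 3)"
    by (auto simp: real_less_rsqrt order.strict_trans1)
  note holo = bloch_schur_holomorphic[OF assms(1)]
  have "continuous_on (cball 0 1) (bloch_schur F)"
    using holo disc by (meson holomorphic_on_imp_continuous_on continuous_on_subset)
  moreover have "bloch_schur F holomorphic_on ball 0 1"
    using holo disc by (meson ball_subset_cball holomorphic_on_subset order.trans)
  moreover have "bloch_schur F 0 = of_real (2*a/3)"
    using assms(2) by (simp add: bloch_schur_def taylor_coeff_def)
  moreover have "\<bar>a\<bar> \<le> 1"
    using assms by (auto simp: bloch_class_def taylor_coeff_def dest!: bspec[of _ _ 0])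
  ultimately have "(\<Sum>j<m. (norm (taylor_coeff (bloch_schur F) (Suc j)))\<^sup>2)
                     \<le> (1 - (2*a/3)\<^sup>2)\<^sup>2 * (\<Sum>j<m. ((2*a/3)\<^sup>2) ^ j)"
    using norm_bloch_schur_le_1[OF assms(1)] by (intro schur_coeff_partial_sums_le) auto
  then show ?thesis
    by (simp only: norm_taylor_coeff_bloch_schur[OF assms(1)] sum_distrib_left)
qed

lemma decseq_power_div:
  fixes \<rho> :: real
  assumes "0 \<le> \<rho>" "\<rho> \<le> 1" "k > 0"
  shows "decseq (\<lambda>j. \<rho> ^ (j + k) / real (j + k))"
  unfolding decseq_Suc_iff using assms
  by (intro allI frac_le power_decreasing) auto

lemma sum_from_2_eq_sum_lessThan:
  fixes f :: "nat \<Rightarrow> 'a :: comm_monoid_add"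
  shows "(\<Sum>k=2..n. f k) = (\<Sum>j<n - 1. f (j + 2))"
proof (cases "n \<ge> 2")
  case True
  then have "{2..n} = {0 + 2..(n - 2) + 2}"
    by simp
  then have "(\<Sum>k=2..n. f k) = (\<Sum>j=0..n-2. f (j + 2))"
    by (simp only: sum.shift_bounds_cl_nat_ivl)
  also have "{0..n-2} = {..<n-1}"
    using True by auto
  finally show ?thesis .
qed auto

lemma sum_from_2_rescale:
  fixes b :: "nat \<Rightarrow> real"
  shows "(\<Sum>k=2..n. real k * b k * r ^ (2*k))
           = 3/4 * (\<Sum>j<n - 1. (3 * r\<^sup>2) ^ (j + 2) / real (j + 2)
                      * (4/27 * (1/3) ^ j * (real (j + 2))\<^sup>2 * b (j + 2)))"
proof -
  have alg: "m * B * R = 3/4 * ((9 * p * R) / m * (4/27 * (1 / p) * m\<^sup>2 * B))"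
    if "p > 0" "m > 0" for p m B R :: real
    using that by (simp add: field_simps power2_eq_square)
  have "(3 * r\<^sup>2) ^ (j + 2) = 3 ^ (j + 2) * r ^ (2 * (j + 2))" for j
    unfolding power_mult_distrib power_mult ..
  moreover have "(3::real) ^ (j + 2) = 9 * 3 ^ j" for j
    by simp
  ultimately have "real (j + 2) * b (j + 2) * r ^ (2 * (j + 2))
                     = 3/4 * ((3 * r\<^sup>2) ^ (j + 2) / real (j + 2)
                              * (4/27 * (1/3) ^ j * (real (j + 2))\<^sup>2 * b (j + 2)))" for j
    unfolding power_one_over by (simp only: alg zero_less_power zero_less_numeral of_nat_0_less_iff
        zero_less_Suc add_2_eq_Suc')
  then show ?thesis
    by (simp only: sum_from_2_eq_sum_lessThan sum_distrib_left)
qed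

lemma sum_geometric_bound_rescale:
  fixes a r :: real
  assumes "a > 0"
  shows "3/4 * (\<Sum>j<n - 1. (3 * r\<^sup>2) ^ (j + 2) / real (j + 2) * ((1 - (2*a/3)\<^sup>2)\<^sup>2 * ((2*a/3)\<^sup>2) ^ j))
           = 3 * (9 - 4 * a\<^sup>2)\<^sup>2 / (64 * a ^ 4) * (\<Sum>k=2..n. (1 / real k) * ((4/3) * a\<^sup>2 * r\<^sup>2) ^ k)"
proof -
  define q where "q = (2*a/3)\<^sup>2"
  define \<rho> where "\<rho> = 3 * r\<^sup>2"
  have "q > 0"
    using assms by (simp add: q_def)
  have K: "3 * (9 - 4 * a\<^sup>2)\<^sup>2 / (64 * a ^ 4) = 3/4 * (1 - q)\<^sup>2 / q\<^sup>2"
    using assms by (simp add: q_def field_simps eval_nat_numeral)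
  have X: "(4/3) * a\<^sup>2 * r\<^sup>2 = q * \<rho>"
    by (simp add: q_def \<rho>_def power2_eq_square)
  have alg: "c * (P / m * (D * Q)) = c * D / q\<^sup>2 * (1 / m * (Q * q\<^sup>2 * P))"
    if "q > 0" "m > 0" for c P m D Q :: real
    using that by (simp add: field_simps)
  have pow: "(q * \<rho>) ^ (j + 2) = q ^ j * q\<^sup>2 * \<rho> ^ (j + 2)" for j
    unfolding power_mult_distrib power_add by (simp only: mult_ac)
  have "3/4 * (\<rho> ^ (j + 2) / real (j + 2) * ((1 - q)\<^sup>2 * q ^ j))
          = 3/4 * (1 - q)\<^sup>2 / q\<^sup>2 * (1 / real (j + 2) * (q * \<rho>) ^ (j + 2))" for j
    unfolding pow using \<open>q > 0\<close> by (intro alg) auto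
  then show ?thesis
    unfolding K X q_def[symmetric] \<rho>_def[symmetric]
    by (simp only: sum_from_2_eq_sum_lessThan sum_distrib_left)
qed

theorem theorem4:
  fixes F :: "complex \<Rightarrow> complex" and a r :: real and n :: nat
  assumes "F \<in> bloch_class"
    and "taylor_coeff F 1 = complex_of_real a"
    and "0 < a" and "a < 1"
    and "0 < r" and "r \<le> 1 / sqrt 3"
    and "n \<ge> 2"
  shows "(\<Sum>k=2..n. real k * (norm (taylor_coeff F k))\<^sup>2 * r ^ (2*k))
         \<le> 3 * (9 - 4 * a\<^sup>2)\<^sup>2 / (64 * a ^ 4)
             * (\<Sum>k=2..n. (1 / real k) * ((4/3) * a\<^sup>2 * r\<^sup>2) ^ k)"
proof -
  define q where "q = (2*a/3)\<^sup>2"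
  define \<rho> where "\<rho> = 3 * r\<^sup>2"
  have "r\<^sup>2 \<le> (1 / sqrt 3)\<^sup>2"
    using assms(5,6) by (intro power_mono) auto
  then have "\<rho> \<le> 1"
    by (simp add: \<rho>_def power_divide)
  have "(\<Sum>k=2..n. real k * (norm (taylor_coeff F k))\<^sup>2 * r ^ (2*k))
          = 3/4 * (\<Sum>j<n - 1. \<rho> ^ (j + 2) / real (j + 2)
                     * (4/27 * (1/3) ^ j * (real (j + 2))\<^sup>2 * (norm (taylor_coeff F (j + 2)))\<^sup>2))"
    unfolding \<rho>_def by (rule sum_from_2_rescale)
  also have "\<dots> \<le> 3/4 * (\<Sum>j<n - 1. \<rho> ^ (j + 2) / real (j + 2) * ((1 - q)\<^sup>2 * q ^ j))"
    using weighted_sum_le_of_partial_sums_le[OF bloch_coeff_partial_sums_le[OF assms(1,2)]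
        decseq_power_div[of \<rho> 2]] \<open>\<rho> \<le> 1\<close>
    by (simp add: \<rho>_def q_def)
  also have "\<dots> = 3 * (9 - 4 * a\<^sup>2)\<^sup>2 / (64 * a ^ 4) * (\<Sum>k=2..n. (1 / real k) * ((4/3) * a\<^sup>2 * r\<^sup>2) ^ k)"
    unfolding \<rho>_def q_def using assms(3) by (rule sum_geometric_bound_rescale)
  finally show ?thesis .
qed

end
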